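(* Suppose $X_1,X_2\in\mathcal L^2$ have the same distribution. Then $(X_1,X_2)\in\mathrm{IC}_0$ if and only if its random rearrangement $(X_{\pi_1},X_{\pi_2})$ is independent.
   Context: $\mathcal L^2$ is the set of non-degenerate real random variables with finite variance. $(X,Y)\in\mathrm{IC}_0$ means $\mathrm{Corr}(g(X),g(Y))=0=\mathrm{Corr}(X,Y)$ for every measurable $g$ with $g(X),g(Y)\in\mathcal L^2$. Let $(\pi_1,\pi_2)$ be uniformly distributed on $\{(1,2),(2,1)\}$ and independent of $(X_1,X_2)$; the random rearrangement of $(X_1,X_2)$ is $(X_{\pi_1},X_{\pi_2})$, whose law is the equal mixture of the laws of $(X_1,X_2)$ and $(X_2,X_1)$. *)

theory Defs
  imports "HOL-Probability.Probability"
begin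

definition in_L2 :: "'a measure \<Rightarrow> ('a \<Rightarrow> real) \<Rightarrow> bool" where
  "in_L2 M Z \<longleftrightarrow> Z \<in> borel_measurable M \<and> integrable M (\<lambda>\<omega>. (Z \<omega>)\<^sup>2)
     \<and> \<not> (\<exists>c. AE \<omega> in M. Z \<omega> = c)"

definition covar :: "'a measure \<Rightarrow> ('a \<Rightarrow> real) \<Rightarrow> ('a \<Rightarrow> real) \<Rightarrow> real" where
  "covar M X Y = (\<integral>\<omega>. (X \<omega> - (\<integral>\<eta>. X \<eta> \<partial>M)) * (Y \<omega> - (\<integral>\<eta>. Y \<eta> \<partial>M)) \<partial>M)"

definition corr :: "'a measure \<Rightarrow> ('a \<Rightarrow> real) \<Rightarrow> ('a \<Rightarrow> real) \<Rightarrow> real" where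
  "corr M X Y = covar M X Y / (sqrt (covar M X X) * sqrt (covar M Y Y))"

definition IC0 :: "'a measure \<Rightarrow> ('a \<Rightarrow> real) \<Rightarrow> ('a \<Rightarrow> real) \<Rightarrow> bool" where
  "IC0 M X Y \<longleftrightarrow> corr M X Y = 0 \<and>
     (\<forall>g :: real \<Rightarrow> real. g \<in> borel_measurable borel \<longrightarrow>
        in_L2 M (g \<circ> X) \<longrightarrow> in_L2 M (g \<circ> Y) \<longrightarrow> corr M (g \<circ> X) (g \<circ> Y) = 0)"

text \<open>Law of the random rearrangement: the equal mixture of the laws of (X1,X2) and (X2,X1).\<close>
definition rearr_law :: "'a measure \<Rightarrow> ('a \<Rightarrow> real) \<Rightarrow> ('a \<Rightarrow> real) \<Rightarrow> (real \<times> real) measure" where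
  "rearr_law M X1 X2 = measure_of (space (borel \<Otimes>\<^sub>M borel)) (sets (borel \<Otimes>\<^sub>M borel))
     (\<lambda>A. (emeasure (distr M (borel \<Otimes>\<^sub>M borel) (\<lambda>\<omega>. (X1 \<omega>, X2 \<omega>))) A
          + emeasure (distr M (borel \<Otimes>\<^sub>M borel) (\<lambda>\<omega>. (X2 \<omega>, X1 \<omega>))) A) / 2)"

end

theory Submission
  imports Defs
begin

(* The law of the rearrangement is the average of the laws of (X1, X2) and (X2, X1), and both of
   its marginals are the common law \<mu> of X1 and X2.  If (X1, X2) is in IC_0, the covariance of
   g(X1) and g(X2) vanishes for every bounded Borel g (trivially when g(X1) is a.s. constant);
   applied to g = 1_A, 1_B and 1_A + 1_B this polarizes to
   P(X1 \<in> A, X2 \<in> B) + P(X1 \<in> B, X2 \<in> A) = 2 \<mu>(A) \<mu>(B),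
   so the rearrangement law is \<mu> \<otimes> \<mu>.  Conversely, g(x) g(y) is symmetric, so under the
   rearrangement law its expectation is E[g(X1) g(X2)], while independence factors it into
   (E g(X1))\<^sup>2. *)

definition average_measure :: "'a measure \<Rightarrow> 'a measure \<Rightarrow> 'a measure" where
  "average_measure N1 N2 = measure_of (space N1) (sets N1) (\<lambda>A. (emeasure N1 A + emeasure N2 A) / 2)"

lemma sets_average_measure [simp, measurable_cong]: "sets (average_measure N1 N2) = sets N1"
  by (simp add: average_measure_def)

lemma space_average_measure [simp]: "space (average_measure N1 N2) = space N1"
  by (simp add: average_measure_def)

lemma emeasure_average_measure:
  assumes sets_eq: "sets N2 = sets N1"
  shows "emeasure (average_measure N1 N2) A = (emeasure N1 A + emeasure N2 A) / 2"
proof (cases "A \<in> sets N1")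
  case True
  show ?thesis unfolding average_measure_def
  proof (rule emeasure_measure_of_sigma)
    show "sigma_algebra (space N1) (sets N1)" ..
    show "positive (sets N1) (\<lambda>A. (emeasure N1 A + emeasure N2 A) / 2)"
      by (simp add: positive_def)
    show "countably_additive (sets N1) (\<lambda>A. (emeasure N1 A + emeasure N2 A) / 2)"
    proof (rule countably_additiveI)
      fix F :: "nat \<Rightarrow> _" assume F: "range F \<subseteq> sets N1" "disjoint_family F"
      then show "(\<Sum>i. (emeasure N1 (F i) + emeasure N2 (F i)) / 2) =
          (emeasure N1 (\<Union>i. F i) + emeasure N2 (\<Union>i. F i)) / 2"
        using sets_eq by (simp add: divide_ennreal_def ennreal_suminf_multc suminf_add[symmetric]
            suminf_emeasure)
    qed
  qed fact
qed (use sets_eq in \<open>simp add: emeasure_notin_sets\<close>)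

lemma nn_integral_average_measure:
  assumes sets_eq: "sets N2 = sets N1" and f: "f \<in> borel_measurable N1"
  shows "2 * (\<integral>\<^sup>+x. f x \<partial>average_measure N1 N2) = (\<integral>\<^sup>+x. f x \<partial>N1) + (\<integral>\<^sup>+x. f x \<partial>N2)"
  using f
proof induction
  case (cong f g)
  have "space N2 = space N1" using sets_eq by (rule sets_eq_imp_space_eq)
  with cong show ?case by (simp cong: nn_integral_cong_simp)
next
  case (set A)
  then have "2 * (\<integral>\<^sup>+x. indicator A x \<partial>average_measure N1 N2) =
      2 * ((emeasure N1 A + emeasure N2 A) / 2)"
    by (simp add: emeasure_average_measure[OF sets_eq])
  also have "\<dots> = emeasure N1 A + emeasure N2 A"
    using ennreal_mult_divide_eq[of 2 "emeasure N1 A + emeasure N2 A"]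
    by (simp only: ennreal_times_divide mult.commute) simp
  finally show ?case using set sets_eq by simp
next
  case (mult f c)
  then show ?case using sets_eq
    by (simp add: nn_integral_cmult mult.left_commute distrib_left)
next
  case (add f g)
  then show ?case using sets_eq
    by (simp add: nn_integral_add distrib_left add_ac)
next
  case (seq U)
  have incseq: "incseq (\<lambda>i. \<integral>\<^sup>+x. U i x \<partial>N)" for N
    using seq by (auto simp: incseq_def le_fun_def intro!: nn_integral_mono)
  from seq show ?case using sets_eq
    by (simp add: nn_integral_monotone_convergence_SUP SUP_mult_left_ennreal image_comp
        ennreal_SUP_add[OF incseq incseq, symmetric])
qed

lemma
  fixes f :: "'a \<Rightarrow> real"
  assumes sets_eq: "sets N2 = sets N1" and f1: "integrable N1 f" and f2: "integrable N2 f"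
  shows integrable_average_measure: "integrable (average_measure N1 N2) f"
    and integral_average_measure:
      "integral\<^sup>L (average_measure N1 N2) f = (integral\<^sup>L N1 f + integral\<^sup>L N2 f) / 2"
proof -
  have f: "f \<in> borel_measurable N1" using f1 by simp
  then have f_avg: "f \<in> borel_measurable (average_measure N1 N2)" by simp
  have finite: "(\<integral>\<^sup>+x. ennreal (g x) \<partial>N) \<noteq> \<infinity>"
    if "integrable N f" "g = f \<or> g = (\<lambda>x. - f x)" for N g
    using that by (auto simp: real_integrable_def)
  have double: "2 * (\<integral>\<^sup>+x. ennreal (g x) \<partial>average_measure N1 N2) =
      (\<integral>\<^sup>+x. ennreal (g x) \<partial>N1) + (\<integral>\<^sup>+x. ennreal (g x) \<partial>N2)"
    if "g = f \<or> g = (\<lambda>x. - f x)" for g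
    using that f by (intro nn_integral_average_measure[OF sets_eq]) auto
  have finite_avg: "(\<integral>\<^sup>+x. ennreal (g x) \<partial>average_measure N1 N2) \<noteq> \<infinity>"
    if "g = f \<or> g = (\<lambda>x. - f x)" for g
  proof -
    have "2 * (\<integral>\<^sup>+x. ennreal (g x) \<partial>average_measure N1 N2) \<noteq> \<infinity>"
      using double[OF that] finite[OF f1 that] finite[OF f2 that] by simp
    then show ?thesis by (simp add: ennreal_mult_eq_top_iff)
  qed
  show avg: "integrable (average_measure N1 N2) f"
    using f_avg finite_avg[of f] finite_avg[of "\<lambda>x. - f x"] by (simp add: real_integrable_def)
  have "2 * enn2real (\<integral>\<^sup>+x. ennreal (g x) \<partial>average_measure N1 N2) =
      enn2real (\<integral>\<^sup>+x. ennreal (g x) \<partial>N1) + enn2real (\<integral>\<^sup>+x. ennreal (g x) \<partial>N2)"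
    if "g = f \<or> g = (\<lambda>x. - f x)" for g
    using arg_cong[OF double[OF that], of enn2real] finite[OF f1 that] finite[OF f2 that]
    by (simp add: enn2real_mult enn2real_plus less_top)
  from this[of f] this[of "\<lambda>x. - f x"] show
    "integral\<^sup>L (average_measure N1 N2) f = (integral\<^sup>L N1 f + integral\<^sup>L N2 f) / 2"
    by (simp add: real_lebesgue_integral_def[OF avg] real_lebesgue_integral_def[OF f1]
        real_lebesgue_integral_def[OF f2])
qed

lemma prob_space_average_measure:
  assumes "prob_space N1" "prob_space N2" and sets_eq: "sets N2 = sets N1"
  shows "prob_space (average_measure N1 N2)"
proof (rule prob_spaceI)
  have "space N2 = space N1" using sets_eq by (rule sets_eq_imp_space_eq)
  then have "emeasure N1 (space N1) = 1" "emeasure N2 (space N1) = 1"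
    using assms by (metis prob_space.emeasure_space_1)+
  then show "emeasure (average_measure N1 N2) (space (average_measure N1 N2)) = 1"
    by (simp add: emeasure_average_measure[OF sets_eq] ennreal_divide_self)
qed

lemma indep_var_fst_snd_pair_measure:
  assumes "prob_space N1" "prob_space N2" and sets_N1: "sets N1 = sets S" and sets_N2: "sets N2 = sets T"
  shows "prob_space.indep_var (N1 \<Otimes>\<^sub>M N2) S fst T snd"
proof -
  interpret N1: prob_space N1 by fact
  interpret N2: prob_space N2 by fact
  interpret pair_prob_space N1 N2 ..
  have sets_pair: "sets (N1 \<Otimes>\<^sub>M N2) = sets (S \<Otimes>\<^sub>M T)"
    using sets_N1 sets_N2 by (rule sets_pair_measure_cong)
  have fst: "fst \<in> measurable (N1 \<Otimes>\<^sub>M N2) S" and snd: "snd \<in> measurable (N1 \<Otimes>\<^sub>M N2) T"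
    using measurable_fst measurable_snd measurable_cong_sets[OF refl sets_N1] measurable_cong_sets[OF refl sets_N2]
    by blast+
  have "distr (N1 \<Otimes>\<^sub>M N2) S fst = N1"
  proof (rule measure_eqI)
    fix A assume "A \<in> sets (distr (N1 \<Otimes>\<^sub>M N2) S fst)"
    then have A_S: "A \<in> sets S" and A: "A \<in> sets N1"
      using sets_N1 by simp_all
    have "fst -` A \<inter> space (N1 \<Otimes>\<^sub>M N2) = A \<times> space N2"
      using sets.sets_into_space[OF A] by (auto simp: space_pair_measure)
    with A show "emeasure (distr (N1 \<Otimes>\<^sub>M N2) S fst) A = emeasure N1 A"
      using emeasure_distr[OF fst A_S] N2.emeasure_pair_measure_Times[OF A sets.top] by (simp add: N2.emeasure_space_1)
  qed (use sets_N1 in simp)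
  moreover have "distr (N1 \<Otimes>\<^sub>M N2) T snd = N2"
  proof (rule measure_eqI)
    fix A assume "A \<in> sets (distr (N1 \<Otimes>\<^sub>M N2) T snd)"
    then have A_T: "A \<in> sets T" and A: "A \<in> sets N2"
      using sets_N2 by simp_all
    have "snd -` A \<inter> space (N1 \<Otimes>\<^sub>M N2) = space N1 \<times> A"
      using sets.sets_into_space[OF A] by (auto simp: space_pair_measure)
    with A show "emeasure (distr (N1 \<Otimes>\<^sub>M N2) T snd) A = emeasure N2 A"
      using emeasure_distr[OF snd A_T] N2.emeasure_pair_measure_Times[OF sets.top[of N1] A] by (simp add: N1.emeasure_space_1)
  qed (use sets_N2 in simp)
  moreover have "distr (N1 \<Otimes>\<^sub>M N2) (S \<Otimes>\<^sub>M T) (\<lambda>x. (fst x, snd x)) = N1 \<Otimes>\<^sub>M N2"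
    using sets_pair by (simp add: distr_id2)
  ultimately show ?thesis
    using fst snd by (simp add: indep_var_distribution_eq)
qed

lemma in_L2_comp_iff_distr:
  assumes X: "X \<in> borel_measurable M" and g: "g \<in> borel_measurable borel"
  shows "in_L2 M (g \<circ> X) \<longleftrightarrow> in_L2 (distr M borel X) g"
proof -
  have "{x \<in> space borel. g x = c} \<in> sets borel" for c
    using g by measurable
  then have "(AE \<omega> in M. g (X \<omega>) = c) \<longleftrightarrow> (AE x in distr M borel X. g x = c)" for c
    using AE_distr_iff[OF X] by simp
  moreover have "(\<lambda>x. (g x)\<^sup>2) \<in> borel_measurable borel"
    using g by measurable
  ultimately show ?thesis
    using X g by (simp add: in_L2_def integrable_distr_eq measurable_comp)
qed

lemma integrable_mult_of_square_integrable:
  fixes a b :: "'a \<Rightarrow> real"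
  assumes "a \<in> borel_measurable M" "b \<in> borel_measurable M"
    and "integrable M (\<lambda>\<omega>. (a \<omega>)\<^sup>2)" "integrable M (\<lambda>\<omega>. (b \<omega>)\<^sup>2)"
  shows "integrable M (\<lambda>\<omega>. a \<omega> * b \<omega>)"
proof (rule Bochner_Integration.integrable_bound)
  show "integrable M (\<lambda>\<omega>. (a \<omega>)\<^sup>2 + (b \<omega>)\<^sup>2)"
    using assms by simp
  have "\<bar>x * y\<bar> \<le> x\<^sup>2 + y\<^sup>2" for x y :: real
  proof -
    have "2 * (\<bar>x\<bar> * \<bar>y\<bar>) \<le> x\<^sup>2 + y\<^sup>2"
      using sum_squares_bound[of "\<bar>x\<bar>" "\<bar>y\<bar>"] by (simp add: mult.assoc)
    moreover have "0 \<le> \<bar>x\<bar> * \<bar>y\<bar>"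
      by simp
    ultimately show ?thesis
      unfolding abs_mult by linarith
  qed
  then show "AE \<omega> in M. norm (a \<omega> * b \<omega>) \<le> norm ((a \<omega>)\<^sup>2 + (b \<omega>)\<^sup>2)"
    by simp
qed (use assms in measurable)

lemma rearr_law_eq_average_measure:
  "rearr_law M X1 X2 = average_measure (distr M (borel \<Otimes>\<^sub>M borel) (\<lambda>\<omega>. (X1 \<omega>, X2 \<omega>)))
     (distr M (borel \<Otimes>\<^sub>M borel) (\<lambda>\<omega>. (X2 \<omega>, X1 \<omega>)))"
  by (simp add: rearr_law_def average_measure_def)

lemma sets_rearr_law [simp, measurable_cong]: "sets (rearr_law M X1 X2) = sets (borel \<Otimes>\<^sub>M borel)"
  by (simp add: rearr_law_eq_average_measure)

context prob_space
begin

lemma prob_space_rearr_law: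
  assumes "random_variable borel X1" "random_variable borel X2"
  shows "prob_space (rearr_law M X1 X2)"
  unfolding rearr_law_eq_average_measure using assms
  by (intro prob_space_average_measure prob_space_distr) auto

lemma
  fixes h :: "real \<times> real \<Rightarrow> real"
  assumes [measurable]: "random_variable borel X1" "random_variable borel X2"
    and [measurable]: "h \<in> borel_measurable (borel \<Otimes>\<^sub>M borel)"
    and h12: "integrable M (\<lambda>\<omega>. h (X1 \<omega>, X2 \<omega>))" and h21: "integrable M (\<lambda>\<omega>. h (X2 \<omega>, X1 \<omega>))"
  shows integrable_rearr_law: "integrable (rearr_law M X1 X2) h"
    and integral_rearr_law: "integral\<^sup>L (rearr_law M X1 X2) h =
      (expectation (\<lambda>\<omega>. h (X1 \<omega>, X2 \<omega>)) + expectation (\<lambda>\<omega>. h (X2 \<omega>, X1 \<omega>))) / 2"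
  using h12 h21 unfolding rearr_law_eq_average_measure
  by (simp_all add: integrable_average_measure integral_average_measure integrable_distr_eq integral_distr)

lemma emeasure_rearr_law_Times:
  assumes [measurable]: "random_variable borel X1" "random_variable borel X2"
    and [measurable]: "A \<in> sets borel" "B \<in> sets borel"
  shows "emeasure (rearr_law M X1 X2) (A \<times> B) =
    ennreal ((\<P>(\<omega> in M. X1 \<omega> \<in> A \<and> X2 \<omega> \<in> B) + \<P>(\<omega> in M. X1 \<omega> \<in> B \<and> X2 \<omega> \<in> A)) / 2)"
proof -
  have "emeasure (distr M (borel \<Otimes>\<^sub>M borel) (\<lambda>\<omega>. (Y1 \<omega>, Y2 \<omega>))) (A \<times> B) =
      \<P>(\<omega> in M. Y1 \<omega> \<in> A \<and> Y2 \<omega> \<in> B)"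
    if [measurable]: "random_variable borel Y1" "random_variable borel Y2" for Y1 Y2
    by (simp add: emeasure_distr emeasure_eq_measure vimage_def Int_def conj_commute)
  then show ?thesis
    unfolding rearr_law_eq_average_measure
    by (simp add: emeasure_average_measure ennreal_plus[symmetric] ennreal_divide_numeral
        conj_commute del: ennreal_plus)
qed

lemma covar_eq_expectation_mult_diff:
  assumes "integrable M a" "integrable M b" "integrable M (\<lambda>\<omega>. a \<omega> * b \<omega>)"
  shows "covar M a b = expectation (\<lambda>\<omega>. a \<omega> * b \<omega>) - expectation a * expectation b"
proof -
  have "(\<lambda>\<omega>. (a \<omega> - expectation a) * (b \<omega> - expectation b)) =
      (\<lambda>\<omega>. a \<omega> * b \<omega> - expectation b * a \<omega> - (expectation a * b \<omega> - expectation a * expectation b))"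
    by (auto simp: algebra_simps)
  then show ?thesis
    using assms by (simp add: covar_def prob_space)
qed

lemma covar_self_pos:
  assumes "in_L2 M a"
  shows "covar M a a > 0"
proof -
  have a: "a \<in> borel_measurable M" and sq: "integrable M (\<lambda>\<omega>. (a \<omega>)\<^sup>2)"
    and nondegenerate: "\<not> (AE \<omega> in M. a \<omega> = expectation a)"
    using assms by (auto simp: in_L2_def)
  have "integrable M (\<lambda>\<omega>. (a \<omega> - expectation a)\<^sup>2)"
    using a sq square_integrable_imp_integrable[OF a sq] by (simp add: power2_diff)
  moreover have "\<not> (AE \<omega> in M. (a \<omega> - expectation a)\<^sup>2 = 0)"
    using nondegenerate by simp
  ultimately have "(\<integral>\<omega>. (a \<omega> - expectation a)\<^sup>2 \<partial>M) \<noteq> 0"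
    by (simp add: integral_nonneg_eq_0_iff_AE)
  moreover have "(\<integral>\<omega>. (a \<omega> - expectation a)\<^sup>2 \<partial>M) \<ge> 0"
    by simp
  ultimately have "(\<integral>\<omega>. (a \<omega> - expectation a)\<^sup>2 \<partial>M) > 0"
    by linarith
  then show ?thesis
    by (simp add: covar_def power2_eq_square)
qed

lemma corr_eq_0_iff_covar_eq_0:
  assumes "in_L2 M a" "in_L2 M b"
  shows "corr M a b = 0 \<longleftrightarrow> covar M a b = 0"
  using covar_self_pos[OF assms(1)] covar_self_pos[OF assms(2)] by (simp add: corr_def)

lemma covar_eq_0_of_AE_const:
  assumes "a \<in> borel_measurable M" "b \<in> borel_measurable M" "AE \<omega> in M. a \<omega> = c"
  shows "covar M a b = 0"
proof -
  have "expectation a = c"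
    using integral_cong_AE[of a M "\<lambda>_. c"] assms by (simp add: prob_space)
  then have "AE \<omega> in M. (a \<omega> - expectation a) * (b \<omega> - expectation b) = 0"
    using assms(3) by auto
  then show ?thesis
    unfolding covar_def by (rule integral_eq_zero_AE)
qed

lemma IC0_imp_covar_comp_eq_0:
  assumes [measurable]: "random_variable borel X1" "random_variable borel X2"
    and same_distr: "distr M borel X1 = distr M borel X2" and "IC0 M X1 X2"
    and [measurable]: "g \<in> borel_measurable borel"
    and square_integrable: "integrable M (\<lambda>\<omega>. (g (X1 \<omega>))\<^sup>2)"
  shows "covar M (g \<circ> X1) (g \<circ> X2) = 0"
proof (cases "in_L2 M (g \<circ> X1)")
  case True
  moreover from this have "in_L2 M (g \<circ> X2)"
    using in_L2_comp_iff_distr[of X1 M g] in_L2_comp_iff_distr[of X2 M g] same_distr by simp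
  ultimately show ?thesis
    using \<open>IC0 M X1 X2\<close> by (simp add: IC0_def corr_eq_0_iff_covar_eq_0)
next
  case False
  then obtain c where "AE \<omega> in M. g (X1 \<omega>) = c"
    using square_integrable by (auto simp: in_L2_def)
  then show ?thesis
    by (intro covar_eq_0_of_AE_const) auto
qed

lemma IC0_imp_expectation_mult_comp:
  fixes g :: "real \<Rightarrow> real"
  assumes [measurable]: "random_variable borel X1" "random_variable borel X2"
    and same_distr: "distr M borel X1 = distr M borel X2" and "IC0 M X1 X2"
    and [measurable]: "g \<in> borel_measurable borel" and bounded: "\<And>x. \<bar>g x\<bar> \<le> C"
  shows "expectation (\<lambda>\<omega>. g (X1 \<omega>) * g (X2 \<omega>)) = (expectation (\<lambda>\<omega>. g (X1 \<omega>)))\<^sup>2"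
proof -
  have "\<bar>g x * g y\<bar> \<le> C * C" for x y
    unfolding abs_mult using bounded by (intro mult_mono) (auto intro: order_trans[OF abs_ge_zero])
  then have integrable_mult: "integrable M (\<lambda>\<omega>. g (Y \<omega>) * g (Z \<omega>))"
    if "random_variable borel Y" "random_variable borel Z" for Y Z
    using that by (intro integrable_const_bound[where B="C * C"]) auto
  have integrable: "integrable M (\<lambda>\<omega>. g (X1 \<omega>))" "integrable M (\<lambda>\<omega>. g (X2 \<omega>))"
    using bounded by (auto intro!: integrable_const_bound[where B=C])
  have "expectation (\<lambda>\<omega>. g (X2 \<omega>)) = expectation (\<lambda>\<omega>. g (X1 \<omega>))"
    using integral_distr[of X1 M borel g] integral_distr[of X2 M borel g] same_distr by simp
  then show ?thesis
    using IC0_imp_covar_comp_eq_0[OF assms(1-5)] integrable_mult[of X1 X1]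
      covar_eq_expectation_mult_diff[OF integrable integrable_mult]
    by (simp add: comp_def power2_eq_square)
qed

lemma IC0_imp_symmetrized_prob_Times:
  assumes [measurable]: "random_variable borel X1" "random_variable borel X2"
    and "distr M borel X1 = distr M borel X2" and "IC0 M X1 X2"
    and [measurable]: "A \<in> sets borel" "B \<in> sets borel"
  shows "\<P>(\<omega> in M. X1 \<omega> \<in> A \<and> X2 \<omega> \<in> B) + \<P>(\<omega> in M. X1 \<omega> \<in> B \<and> X2 \<omega> \<in> A) =
    2 * \<P>(\<omega> in M. X1 \<omega> \<in> A) * \<P>(\<omega> in M. X1 \<omega> \<in> B)"
proof -
  define cross where
    "cross S T = expectation (\<lambda>\<omega>. indicator S (X1 \<omega>) * indicator T (X2 \<omega>) :: real)" for S T
  have cross_eq: "cross S T = \<P>(\<omega> in M. X1 \<omega> \<in> S \<and> X2 \<omega> \<in> T)" for S T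
  proof -
    have "cross S T = expectation (indicator {\<omega> \<in> space M. X1 \<omega> \<in> S \<and> X2 \<omega> \<in> T})"
      unfolding cross_def by (intro Bochner_Integration.integral_cong) (auto split: split_indicator)
    then show ?thesis
      by (simp add: Int_absorb2)
  qed
  have single_eq: "expectation (\<lambda>\<omega>. indicator S (X1 \<omega>) :: real) = \<P>(\<omega> in M. X1 \<omega> \<in> S)" for S
  proof -
    have "expectation (\<lambda>\<omega>. indicator S (X1 \<omega>) :: real) = expectation (indicator {\<omega> \<in> space M. X1 \<omega> \<in> S})"
      by (intro Bochner_Integration.integral_cong) (auto split: split_indicator)
    then show ?thesis
      by (simp add: Int_absorb2)
  qed
  have integrable_cross: "integrable M (\<lambda>\<omega>. indicator S (X1 \<omega>) * indicator T (X2 \<omega>) :: real)"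
    if [measurable]: "S \<in> sets borel" "T \<in> sets borel" for S T
    by (intro integrable_const_bound[where B=1]) (auto split: split_indicator)
  have integrable_single: "integrable M (\<lambda>\<omega>. indicator S (X1 \<omega>) :: real)"
    if [measurable]: "S \<in> sets borel" for S
    by (intro integrable_const_bound[where B=1]) (auto split: split_indicator)
  have moment: "expectation (\<lambda>\<omega>. h (X1 \<omega>) * h (X2 \<omega>)) = (expectation (\<lambda>\<omega>. h (X1 \<omega>)))\<^sup>2"
    if "h \<in> borel_measurable borel" "\<And>x. \<bar>h x\<bar> \<le> 2" for h :: "real \<Rightarrow> real"
    using IC0_imp_expectation_mult_comp[OF assms(1-4) that] .
  have "cross S S = (\<P>(\<omega> in M. X1 \<omega> \<in> S))\<^sup>2" if "S \<in> sets borel" for S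
    using moment[of "indicator S"] that unfolding cross_def single_eq
    by (simp split: split_indicator)
  moreover
  have "\<bar>indicator A x + indicator B x\<bar> \<le> (2::real)" for x
    by (simp split: split_indicator)
  then have "cross A A + cross A B + cross B A + cross B B =
      (\<P>(\<omega> in M. X1 \<omega> \<in> A) + \<P>(\<omega> in M. X1 \<omega> \<in> B))\<^sup>2"
    using moment[of "\<lambda>x. indicator A x + indicator B x"]
    by (simp add: cross_def distrib_left distrib_right integrable_cross integrable_single
        single_eq[symmetric] add_ac)
  ultimately show ?thesis
    by (simp add: cross_eq[symmetric] power2_eq_square algebra_simps)
qed

lemma IC0_imp_rearr_law_eq_pair_measure:
  assumes [measurable]: "random_variable borel X1" "random_variable borel X2"
    and "distr M borel X1 = distr M borel X2" and "IC0 M X1 X2"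
  shows "rearr_law M X1 X2 = distr M borel X1 \<Otimes>\<^sub>M distr M borel X1"
proof (rule pair_measure_eqI[symmetric])
  show "sigma_finite_measure (distr M borel X1)"
    by (intro prob_space_imp_sigma_finite prob_space_distr) simp
  then show "sigma_finite_measure (distr M borel X1)" .
  show "sets (distr M borel X1 \<Otimes>\<^sub>M distr M borel X1) = sets (rearr_law M X1 X2)"
    by simp
  fix A B assume "A \<in> sets (distr M borel X1)" "B \<in> sets (distr M borel X1)"
  then have [measurable]: "A \<in> sets borel" "B \<in> sets borel"
    by simp_all
  have "emeasure (distr M borel X1) S = \<P>(\<omega> in M. X1 \<omega> \<in> S)" if [measurable]: "S \<in> sets borel" for S
    by (simp add: emeasure_distr emeasure_eq_measure vimage_def Int_def conj_commute)
  then show "emeasure (distr M borel X1) A * emeasure (distr M borel X1) B =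
      emeasure (rearr_law M X1 X2) (A \<times> B)"
    using IC0_imp_symmetrized_prob_Times[OF assms]
    by (simp add: emeasure_rearr_law_Times ennreal_mult[symmetric])
qed

lemma indep_rearr_law_imp_covar_comp_eq_0:
  assumes [measurable]: "random_variable borel X1" "random_variable borel X2"
    and same_distr: "distr M borel X1 = distr M borel X2"
    and indep: "prob_space.indep_var (rearr_law M X1 X2) borel fst borel snd"
    and [measurable]: "g \<in> borel_measurable borel"
    and square_integrable: "integrable M (\<lambda>\<omega>. (g (X1 \<omega>))\<^sup>2)" "integrable M (\<lambda>\<omega>. (g (X2 \<omega>))\<^sup>2)"
  shows "covar M (g \<circ> X1) (g \<circ> X2) = 0"
proof -
  interpret R: prob_space "rearr_law M X1 X2"
    by (intro prob_space_rearr_law) simp_all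
  have integrable: "integrable M (\<lambda>\<omega>. g (X1 \<omega>))" "integrable M (\<lambda>\<omega>. g (X2 \<omega>))"
    using square_integrable by (simp_all add: square_integrable_imp_integrable)
  have integrable_mult: "integrable M (\<lambda>\<omega>. g (X1 \<omega>) * g (X2 \<omega>))"
    using square_integrable by (intro integrable_mult_of_square_integrable) simp_all
  have same_expectation: "expectation (\<lambda>\<omega>. g (X2 \<omega>)) = expectation (\<lambda>\<omega>. g (X1 \<omega>))"
    using integral_distr[of X1 M borel g] integral_distr[of X2 M borel g] same_distr by simp
  have "R.indep_var borel (\<lambda>z. g (fst z)) borel (\<lambda>z. g (snd z))"
    using R.indep_var_compose[OF indep, of g borel g borel] by (simp add: comp_def)
  then have "R.expectation (\<lambda>z. g (fst z) * g (snd z)) =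
      R.expectation (\<lambda>z. g (fst z)) * R.expectation (\<lambda>z. g (snd z))"
    using integrable integrable_mult
    by (intro R.indep_var_lebesgue_integral) (auto intro!: integrable_rearr_law)
  then have "expectation (\<lambda>\<omega>. g (X1 \<omega>) * g (X2 \<omega>)) =
      expectation (\<lambda>\<omega>. g (X1 \<omega>)) * expectation (\<lambda>\<omega>. g (X2 \<omega>))"
    using integrable integrable_mult same_expectation
    by (simp add: integral_rearr_law mult.commute)
  then show ?thesis
    using covar_eq_expectation_mult_diff[OF integrable integrable_mult] by (simp add: comp_def)
qed

end

theorem proposition2:
  fixes M :: "'a measure" and X1 X2 :: "'a \<Rightarrow> real"
  assumes "prob_space M"
    and "in_L2 M X1" and "in_L2 M X2"
    and "distr M borel X1 = distr M borel X2"
  shows "IC0 M X1 X2 \<longleftrightarrow>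
         prob_space.indep_var (rearr_law M X1 X2) borel fst borel snd"
proof -
  interpret prob_space M by fact
  have X: "random_variable borel X1" "random_variable borel X2"
    using assms(2,3) by (simp_all add: in_L2_def)
  show ?thesis
  proof
    assume "IC0 M X1 X2"
    then have "rearr_law M X1 X2 = distr M borel X1 \<Otimes>\<^sub>M distr M borel X1"
      using IC0_imp_rearr_law_eq_pair_measure X assms(4) by blast
    then show "prob_space.indep_var (rearr_law M X1 X2) borel fst borel snd"
      using X by (simp add: indep_var_fst_snd_pair_measure prob_space_distr)
  next
    assume indep: "prob_space.indep_var (rearr_law M X1 X2) borel fst borel snd"
    have corr_comp: "corr M (g \<circ> X1) (g \<circ> X2) = 0"
      if "g \<in> borel_measurable borel" "in_L2 M (g \<circ> X1)" "in_L2 M (g \<circ> X2)" for g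
      using that indep_rearr_law_imp_covar_comp_eq_0[OF X assms(4) indep, of g]
      by (simp add: corr_eq_0_iff_covar_eq_0 in_L2_def comp_def)
    moreover have "corr M X1 X2 = 0"
      using corr_comp[of "\<lambda>x. x"] assms(2,3) by (simp add: comp_def)
    ultimately show "IC0 M X1 X2"
      by (simp add: IC0_def)
  qed
qed

end
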